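(* Almost surely, $$\lim_{m\to\infty}\lim_{\tau\to x_q^-}U_m(s_2(\tau))=-x_u,\qquad \lim_{m\to\infty}\lim_{\tau\to x_q^-}U_m(s_1(\tau))=(1-\pi)(x_q+x_u),$$ these limits equal $\mathbb E[\lim_{\tau\to x_q^-}u(s_k(\Theta,\tau))]$ for $k=2,1$ respectively, and in particular $\mathbb E\big[\lim_{\tau\to x_q^-}u(s_2(\Theta,\tau))-\lim_{\tau\to x_q^-}u(s_1(\Theta,\tau))\big]<0$.
   Context: Setup. Let $Q\in\{0,1\}$ be a random variable with $\mathbb P(Q=1)=\pi\in(0,1)$, and let $(\Theta,\Gamma)$ be a real-valued random vector whose conditional joint density given $Q=1$ is $h_q$ and given $Q=0$ is $h_u$, both strictly positive on $\mathbb R^2$. Monotone likelihood ratio assumption: $l(\theta,\gamma)=h_q(\theta,\gamma)/h_u(\theta,\gamma)$ is continuous and strictly increasing in each of $\theta$ and $\gamma$, and for each $\theta$ the map $\gamma\mapsto l(\theta,\gamma)$ has infimum $0$ and supremum $+\infty$. Fix payoffs $x_q>0$, $x_u>0$. For $\tau\in(-x_u,x_q)$ let $A(\tau)=\mathbb 1\{l(\Theta,\Gamma)>\frac{(1-\pi)(x_u+\tau)}{\pi(x_q-\tau)}\}$, $s_1(\theta,\tau)=\mathbb E[Q\mid\Theta=\theta,A(\tau)=1]$, $s_2(\theta,\tau)=\mathbb E[A(\tau)\mid\Theta=\theta]$. Regret. Fix a cutoff $c\in(-x_u,x_q)$. For a score value $s\in[0,1]$ and a qualification value $Q\in\{0,1\}$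 define $\mathcal N(s)=sx_q-(1-s)x_u$, $A'(s)=\mathbb 1\{\mathcal N(s)>c\}$, $\mathcal P(s)=A'(s)(Qx_q-(1-Q)x_u)$, and the individual regret $u(s)=\mathcal N(s)-\mathcal P(s)$; when evaluated at a random applicant $(\Theta,Q)$, $u(s_k(\Theta,\tau))$ uses that applicant's $Q$. Average regret. Let $(Q_i,\Theta_i)_{i\ge1}$ be i.i.d. copies of $(Q,\Theta)$ and, for $m\ge1$, $U_m(s_k(\tau))=\frac1m\sum_{i=1}^m u_i(s_k(\Theta_i,\tau))$, where $u_i$ is the regret computed with $Q_i$. *)

theory Defs
  imports "HOL-Probability.Probability"
begin

definition lr :: "(real \<times> real \<Rightarrow> real) \<Rightarrow> (real \<times> real \<Rightarrow> real) \<Rightarrow> real \<Rightarrow> real \<Rightarrow> real" where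
  "lr hq hu \<theta> \<gamma> = hq (\<theta>, \<gamma>) / hu (\<theta>, \<gamma>)"

definition thr :: "real \<Rightarrow> real \<Rightarrow> real \<Rightarrow> real \<Rightarrow> real" where
  "thr \<pi> xq xu \<tau> = (1 - \<pi>) * (xu + \<tau>) / (\<pi> * (xq - \<tau>))"

text \<open>Section at Theta = theta of the acceptance event A(tau)=1.\<close>
definition acc_set :: "(real \<times> real \<Rightarrow> real) \<Rightarrow> (real \<times> real \<Rightarrow> real) \<Rightarrow> real \<Rightarrow> real \<Rightarrow> real \<Rightarrow> real \<Rightarrow> real \<Rightarrow> real set" where
  "acc_set hq hu \<pi> xq xu \<theta> \<tau> = {\<gamma>. lr hq hu \<theta> \<gamma> > thr \<pi> xq xu \<tau>}"

text \<open>Joint (unconditional) density of (Theta,Gamma).\<close>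
definition mix :: "(real \<times> real \<Rightarrow> real) \<Rightarrow> (real \<times> real \<Rightarrow> real) \<Rightarrow> real \<Rightarrow> real \<times> real \<Rightarrow> real" where
  "mix hq hu \<pi> z = \<pi> * hq z + (1 - \<pi>) * hu z"

text \<open>s_2(theta,tau) = E[A(tau) | Theta = theta] = P(A(tau)=1 | Theta=theta), via densities.\<close>
definition s2 :: "(real \<times> real \<Rightarrow> real) \<Rightarrow> (real \<times> real \<Rightarrow> real) \<Rightarrow> real \<Rightarrow> real \<Rightarrow> real \<Rightarrow> real \<Rightarrow> real \<Rightarrow> real" where
  "s2 hq hu \<pi> xq xu \<theta> \<tau> =
     (LINT \<gamma>:acc_set hq hu \<pi> xq xu \<theta> \<tau>|lborel. mix hq hu \<pi> (\<theta>, \<gamma>)) /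
     (LINT \<gamma>|lborel. mix hq hu \<pi> (\<theta>, \<gamma>))"

text \<open>s_1(theta,tau) = E[Q | Theta = theta, A(tau)=1], via densities.\<close>
definition s1 :: "(real \<times> real \<Rightarrow> real) \<Rightarrow> (real \<times> real \<Rightarrow> real) \<Rightarrow> real \<Rightarrow> real \<Rightarrow> real \<Rightarrow> real \<Rightarrow> real \<Rightarrow> real" where
  "s1 hq hu \<pi> xq xu \<theta> \<tau> =
     (LINT \<gamma>:acc_set hq hu \<pi> xq xu \<theta> \<tau>|lborel. \<pi> * hq (\<theta>, \<gamma>)) /
     (LINT \<gamma>:acc_set hq hu \<pi> xq xu \<theta> \<tau>|lborel. mix hq hu \<pi> (\<theta>, \<gamma>))"

definition netv :: "real \<Rightarrow> real \<Rightarrow> real \<Rightarrow> real" where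
  "netv xq xu s = s * xq - (1 - s) * xu"

definition accp :: "real \<Rightarrow> real \<Rightarrow> real \<Rightarrow> real \<Rightarrow> real" where
  "accp c xq xu s = (if netv xq xu s > c then 1 else 0)"

definition payoff :: "real \<Rightarrow> real \<Rightarrow> real \<Rightarrow> real \<Rightarrow> real \<Rightarrow> real" where
  "payoff c xq xu s q = accp c xq xu s * (q * xq - (1 - q) * xu)"

definition regret :: "real \<Rightarrow> real \<Rightarrow> real \<Rightarrow> real \<Rightarrow> real \<Rightarrow> real" where
  "regret c xq xu s q = netv xq xu s - payoff c xq xu s q"

definition avg_regret :: "real \<Rightarrow> real \<Rightarrow> real \<Rightarrow> (real \<Rightarrow> real \<Rightarrow> real)
    \<Rightarrow> (nat \<Rightarrow> 'a \<Rightarrow> real) \<Rightarrow> (nat \<Rightarrow> 'a \<Rightarrow> real) \<Rightarrow> nat \<Rightarrow> 'a \<Rightarrow> real \<Rightarrow> real" where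
  "avg_regret c xq xu s Qs Ths m \<omega> \<tau> =
     (1 / real m) * (\<Sum>i\<in>{1..m}. regret c xq xu (s (Ths i \<omega>) \<tau>) (Qs i \<omega>))"

end

theory Submission
  imports Defs
begin

text \<open>
  As \<open>\<tau>\<close> tends to \<open>x\<^sub>q\<close> from below, the likelihood-ratio threshold of the acceptance rule tends
  to \<open>+\<infinity>\<close>. By dominated convergence the acceptance probability \<open>s\<^sub>2(\<theta>, \<tau>)\<close> then tends to 0, so the
  net value of every applicant falls below the cutoff and the regret tends to \<open>-x\<^sub>u\<close>. On the set
  where the likelihood ratio exceeds \<open>t\<close>, the density of unqualified applicants is at most \<open>1/t\<close>
  times that of qualified ones, so \<open>s\<^sub>1(\<theta>, \<tau>)\<close> tends to 1 for every \<open>\<theta>\<close> with integrable sections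
  of the densities, which by Fubini is almost every \<open>\<theta>\<close>; the regret then tends to
  \<open>(x\<^sub>q + x\<^sub>u)(1 - Q)\<close>. Averages over the i.i.d. copies converge by the strong law of large
  numbers for the bounded labels \<open>Q\<^sub>i\<close>, obtained from Hoeffding's inequality and Borel-Cantelli,
  and the expectations of the limits are \<open>-x\<^sub>u\<close> and \<open>(1 - \<pi>)(x\<^sub>q + x\<^sub>u)\<close>.
\<close>

section \<open>Scores as the acceptance threshold diverges\<close>

lemma thr_tendsto_at_top:
  assumes "0 < \<pi>" "\<pi> < 1" "xq > 0" "xu > 0"
  shows "filterlim (thr \<pi> xq xu) at_top (at_left xq)"
proof -
  have "LIM \<tau> at_left xq. inverse (xq - \<tau>) :> at_top"
    by (intro filterlim_inverse_at_top tendsto_eq_intros)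
       (auto simp: eventually_at_left_field intro: exI[of _ "xq - 1"])
  then have "LIM \<tau> at_left xq. (1 - \<pi>) * (xu + \<tau>) / \<pi> * inverse (xq - \<tau>) :> at_top"
    using assms by (intro filterlim_tendsto_pos_mult_at_top[where c = "(1 - \<pi>) * (xu + xq) / \<pi>"]
        tendsto_eq_intros) auto
  then show ?thesis
    by (rule filterlim_cong[THEN iffD1, rotated 3]) (auto simp: thr_def field_simps)
qed

lemma set_integral_superlevel_tendsto_0:
  fixes f g :: "'a \<Rightarrow> real"
  assumes f: "integrable M f" "\<And>x. f x \<ge> 0" and g [measurable]: "g \<in> borel_measurable M"
  shows "((\<lambda>t. LINT x:{x. g x > t}|M. f x) \<longlongrightarrow> 0) at_top"
proof -
  have "((\<lambda>t. LINT x|M. indicator {x. g x > t} x *\<^sub>R f x) \<longlongrightarrow> (LINT x|M. 0)) at_top"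
  proof (rule integral_dominated_convergence_at_top[where w = f])
    show "AE x in M. ((\<lambda>t. indicator {x. g x > t} x *\<^sub>R f x) \<longlongrightarrow> 0) at_top"
    proof (rule AE_I2)
      fix x
      have "\<forall>\<^sub>F t in at_top. indicator {x. g x > t} x *\<^sub>R f x = 0"
        using eventually_ge_at_top[of "g x"] by eventually_elim (auto simp: indicator_def)
      then show "((\<lambda>t. indicator {x. g x > t} x *\<^sub>R f x) \<longlongrightarrow> 0) at_top"
        by (rule tendsto_eventually)
    qed
    show "\<forall>\<^sub>F t in at_top. AE x in M. norm (indicator {x. g x > t} x *\<^sub>R f x) \<le> f x"
      using f(2) by (auto simp: indicator_def)
    show "(\<lambda>x. indicator {x. g x > t} x *\<^sub>R f x) \<in> borel_measurable M" for t
      using f(1) by measurable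
  qed (use f in auto)
  then show ?thesis by (simp add: set_lebesgue_integral_def)
qed

lemma set_integral_pos:
  fixes h :: "'a \<Rightarrow> real"
  assumes "set_integrable M A h" "A \<in> sets M" "\<And>x. x \<in> A \<Longrightarrow> h x > 0" "emeasure M A \<noteq> 0"
  shows "(LINT x:A|M. h x) > 0"
proof -
  have "(LINT x:A|M. h x) \<ge> 0"
    unfolding set_lebesgue_integral_def using assms(3)
    by (intro Bochner_Integration.integral_nonneg) (auto simp: indicator_def less_imp_le)
  moreover have "(LINT x:A|M. h x) \<noteq> 0"
  proof
    assume "(LINT x:A|M. h x) = 0"
    then have "AE x in M. indicator A x * h x = 0"
      using assms(1,3) unfolding set_lebesgue_integral_def set_integrable_def
      by (subst (asm) integral_nonneg_eq_0_iff_AE) (auto simp: indicator_def less_imp_le)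
    then have "AE x in M. x \<notin> A"
      by eventually_elim (use assms(3) in \<open>fastforce simp: indicator_def split: if_splits\<close>)
    then show False
      using assms(2,4) sets.sets_into_space[OF assms(2)]
      by (subst (asm) AE_iff_measurable) (auto simp: Int_absorb1 Collect_conj_eq Int_def[symmetric])
  qed
  ultimately show ?thesis by linarith
qed

lemma divide_add_ge_one_minus:
  fixes N R k :: real
  assumes "N > 0" "R \<ge> 0" "R \<le> k * N"
  shows "1 - k \<le> N / (N + R)"
proof -
  have "k \<ge> 0" using assms zero_le_mult_iff[of k N] by linarith
  then have "k * R \<ge> 0" using assms by simp
  then have "(1 - k) * (N + R) \<le> N" using assms by (simp add: algebra_simps)
  then show ?thesis using assms by (simp add: pos_le_divide_eq)
qed

lemma posterior_ratio_bounds: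
  fixes p u :: "real \<Rightarrow> real"
  assumes p: "integrable lborel p" "\<And>\<gamma>. p \<gamma> > 0" and u: "integrable lborel u" "\<And>\<gamma>. u \<gamma> > 0"
    and \<pi>: "0 < \<pi>" "\<pi> < 1" and "t > 0"
    and A: "A \<in> sets lborel" "emeasure lborel A \<noteq> 0" "\<And>\<gamma>. \<gamma> \<in> A \<Longrightarrow> p \<gamma> / u \<gamma> > t"
  shows "1 - (1 - \<pi>) / (\<pi> * t) \<le>
      (LINT \<gamma>:A|lborel. \<pi> * p \<gamma>) / (LINT \<gamma>:A|lborel. \<pi> * p \<gamma> + (1 - \<pi>) * u \<gamma>)"
    and "(LINT \<gamma>:A|lborel. \<pi> * p \<gamma>) / (LINT \<gamma>:A|lborel. \<pi> * p \<gamma> + (1 - \<pi>) * u \<gamma>) \<le> 1"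
proof -
  define N where "N = (LINT \<gamma>:A|lborel. \<pi> * p \<gamma>)"
  define R where "R = (LINT \<gamma>:A|lborel. (1 - \<pi>) * u \<gamma>)"
  have integrable: "set_integrable lborel A (\<lambda>\<gamma>. a * f \<gamma>)" if "integrable lborel f" for f :: "real \<Rightarrow> real" and a
    unfolding set_integrable_def using that A(1) by (intro integrable_mult_indicator) auto
  have N_pos: "N > 0"
    unfolding N_def using p \<pi> A by (intro set_integral_pos integrable) auto
  have R_nonneg: "R \<ge> 0"
    unfolding R_def set_lebesgue_integral_def using u(2) \<pi>
    by (intro Bochner_Integration.integral_nonneg) (auto simp: indicator_def less_imp_le)
  have "R \<le> (LINT \<gamma>:A|lborel. (1 - \<pi>) / (\<pi> * t) * (\<pi> * p \<gamma>))"
    unfolding R_def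
  proof (rule set_integral_mono)
    fix \<gamma> assume "\<gamma> \<in> A"
    then have "u \<gamma> \<le> p \<gamma> / t" using A(3)[of \<gamma>] u(2)[of \<gamma>] \<open>t > 0\<close> by (simp add: field_simps)
    then have "(1 - \<pi>) * u \<gamma> \<le> (1 - \<pi>) * (p \<gamma> / t)"
      using \<pi> by (intro mult_left_mono) auto
    then show "(1 - \<pi>) * u \<gamma> \<le> (1 - \<pi>) / (\<pi> * t) * (\<pi> * p \<gamma>)"
      using \<pi> by simp
  next
    show "set_integrable lborel A (\<lambda>\<gamma>. (1 - \<pi>) * u \<gamma>)"
      using u(1) by (rule integrable)
    show "set_integrable lborel A (\<lambda>\<gamma>. (1 - \<pi>) / (\<pi> * t) * (\<pi> * p \<gamma>))"
      using p(1) by (intro integrable) auto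
  qed
  also have "\<dots> = (1 - \<pi>) / (\<pi> * t) * N"
    unfolding N_def by simp
  finally have "1 - (1 - \<pi>) / (\<pi> * t) \<le> N / (N + R)"
    by (rule divide_add_ge_one_minus[OF N_pos R_nonneg])
  moreover have "N / (N + R) \<le> 1"
    using N_pos R_nonneg by simp
  moreover have "(LINT \<gamma>:A|lborel. \<pi> * p \<gamma> + (1 - \<pi>) * u \<gamma>) = N + R"
    unfolding N_def R_def using integrable[OF p(1)] integrable[OF u(1)] by (rule set_integral_add(2))
  ultimately show "1 - (1 - \<pi>) / (\<pi> * t) \<le>
      (LINT \<gamma>:A|lborel. \<pi> * p \<gamma>) / (LINT \<gamma>:A|lborel. \<pi> * p \<gamma> + (1 - \<pi>) * u \<gamma>)"
    and "(LINT \<gamma>:A|lborel. \<pi> * p \<gamma>) / (LINT \<gamma>:A|lborel. \<pi> * p \<gamma> + (1 - \<pi>) * u \<gamma>) \<le> 1"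
    unfolding N_def by simp_all
qed

lemma superlevel_posterior_tendsto_1:
  fixes p u :: "real \<Rightarrow> real"
  assumes p: "integrable lborel p" "\<And>\<gamma>. p \<gamma> > 0" and u: "integrable lborel u" "\<And>\<gamma>. u \<gamma> > 0"
    and \<pi>: "0 < \<pi>" "\<pi> < 1"
    and mono: "strict_mono (\<lambda>\<gamma>. p \<gamma> / u \<gamma>)" and unbdd: "\<not> bdd_above (range (\<lambda>\<gamma>. p \<gamma> / u \<gamma>))"
  shows "((\<lambda>t. (LINT \<gamma>:{\<gamma>. p \<gamma> / u \<gamma> > t}|lborel. \<pi> * p \<gamma>) /
               (LINT \<gamma>:{\<gamma>. p \<gamma> / u \<gamma> > t}|lborel. \<pi> * p \<gamma> + (1 - \<pi>) * u \<gamma>)) \<longlongrightarrow> 1) at_top"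
proof (rule tendsto_sandwich[OF _ _ _ tendsto_const])
  have [measurable]: "p \<in> borel_measurable borel" "u \<in> borel_measurable borel"
    using p(1) u(1) by (simp_all add: borel_measurable_integrable measurable_lborel2)
  have superlevel: "{\<gamma>. p \<gamma> / u \<gamma> > t} \<in> sets lborel" "emeasure lborel {\<gamma>. p \<gamma> / u \<gamma> > t} \<noteq> 0" for t
  proof -
    show sets: "{\<gamma>. p \<gamma> / u \<gamma> > t} \<in> sets lborel"
      by measurable
    obtain \<gamma>\<^sub>0 where "p \<gamma>\<^sub>0 / u \<gamma>\<^sub>0 > t"
      using unbdd by (force simp: bdd_above_def not_le)
    then have "{\<gamma>\<^sub>0<..\<gamma>\<^sub>0 + 1} \<subseteq> {\<gamma>. p \<gamma> / u \<gamma> > t}"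
      using mono by (auto simp: strict_mono_def intro: less_trans)
    then have "emeasure lborel {\<gamma>\<^sub>0<..\<gamma>\<^sub>0 + 1} \<le> emeasure lborel {\<gamma>. p \<gamma> / u \<gamma> > t}"
      by (intro emeasure_mono sets)
    then show "emeasure lborel {\<gamma>. p \<gamma> / u \<gamma> > t} \<noteq> 0"
      by auto
  qed
  show "\<forall>\<^sub>F t in at_top. 1 - (1 - \<pi>) / (\<pi> * t) \<le>
      (LINT \<gamma>:{\<gamma>. p \<gamma> / u \<gamma> > t}|lborel. \<pi> * p \<gamma>) /
      (LINT \<gamma>:{\<gamma>. p \<gamma> / u \<gamma> > t}|lborel. \<pi> * p \<gamma> + (1 - \<pi>) * u \<gamma>)"
    using eventually_gt_at_top[of 0]
    by eventually_elim (rule posterior_ratio_bounds(1)[OF p u \<pi> _ superlevel]; simp)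
  show "\<forall>\<^sub>F t in at_top. (LINT \<gamma>:{\<gamma>. p \<gamma> / u \<gamma> > t}|lborel. \<pi> * p \<gamma>) /
      (LINT \<gamma>:{\<gamma>. p \<gamma> / u \<gamma> > t}|lborel. \<pi> * p \<gamma> + (1 - \<pi>) * u \<gamma>) \<le> 1"
    using eventually_gt_at_top[of 0]
    by eventually_elim (rule posterior_ratio_bounds(2)[OF p u \<pi> _ superlevel]; simp)
  have "((\<lambda>t. 1 - (1 - \<pi>) / \<pi> * inverse t) \<longlongrightarrow> 1 - (1 - \<pi>) / \<pi> * 0) at_top"
    by (intro tendsto_intros tendsto_inverse_0_at_top filterlim_ident)
  then show "((\<lambda>t. 1 - (1 - \<pi>) / (\<pi> * t)) \<longlongrightarrow> 1) at_top"
    by (simp add: field_simps)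
qed

lemma s2_tendsto_0:
  assumes "hq \<in> borel_measurable borel" "hu \<in> borel_measurable borel"
    and "\<forall>z. hq z > 0" "\<forall>z. hu z > 0" "0 < \<pi>" "\<pi> < 1" "xq > 0" "xu > 0"
  shows "((\<lambda>\<tau>. s2 hq hu \<pi> xq xu \<theta> \<tau>) \<longlongrightarrow> 0) (at_left xq)"
proof (cases "integrable lborel (\<lambda>\<gamma>. mix hq hu \<pi> (\<theta>, \<gamma>))")
  case False
  \<comment> \<open>the junk value 0 of the non-existent integral in the denominator makes \<open>s2\<close> vanish\<close>
  then show ?thesis by (simp add: s2_def not_integrable_integral_eq)
next
  case True
  have "mix hq hu \<pi> (\<theta>, \<gamma>) \<ge> 0" for \<gamma>
    using assms(3-6) by (simp add: mix_def less_imp_le)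
  moreover have "(\<lambda>\<gamma>. lr hq hu \<theta> \<gamma>) \<in> borel_measurable lborel"
    using assms(1,2) unfolding lr_def by measurable
  ultimately have "((\<lambda>t. LINT \<gamma>:{\<gamma>. lr hq hu \<theta> \<gamma> > t}|lborel. mix hq hu \<pi> (\<theta>, \<gamma>)) \<longlongrightarrow> 0) at_top"
    using True by (intro set_integral_superlevel_tendsto_0)
  from filterlim_compose[OF this thr_tendsto_at_top[OF assms(5-8)]]
  show ?thesis
    unfolding s2_def acc_set_def by (rule tendsto_divide_zero)
qed

lemma s1_tendsto_1:
  assumes "hq \<in> borel_measurable borel" "hu \<in> borel_measurable borel"
    and "\<forall>z. hq z > 0" "\<forall>z. hu z > 0" "0 < \<pi>" "\<pi> < 1" "xq > 0" "xu > 0"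
    and "integrable lborel (\<lambda>\<gamma>. hq (\<theta>, \<gamma>))" "integrable lborel (\<lambda>\<gamma>. hu (\<theta>, \<gamma>))"
    and "strict_mono (\<lambda>\<gamma>. lr hq hu \<theta> \<gamma>)" "\<not> bdd_above (range (\<lambda>\<gamma>. lr hq hu \<theta> \<gamma>))"
  shows "((\<lambda>\<tau>. s1 hq hu \<pi> xq xu \<theta> \<tau>) \<longlongrightarrow> 1) (at_left xq)"
proof -
  have "((\<lambda>t. (LINT \<gamma>:{\<gamma>. hq (\<theta>, \<gamma>) / hu (\<theta>, \<gamma>) > t}|lborel. \<pi> * hq (\<theta>, \<gamma>)) /
               (LINT \<gamma>:{\<gamma>. hq (\<theta>, \<gamma>) / hu (\<theta>, \<gamma>) > t}|lborel.
                  \<pi> * hq (\<theta>, \<gamma>) + (1 - \<pi>) * hu (\<theta>, \<gamma>))) \<longlongrightarrow> 1) at_top"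
    using assms by (intro superlevel_posterior_tendsto_1) (simp_all add: lr_def)
  from filterlim_compose[OF this thr_tendsto_at_top[OF assms(5-8)]]
  show ?thesis
    by (simp add: s1_def acc_set_def lr_def mix_def)
qed

section \<open>Limits of the regret\<close>

lemma regret_tendsto_of_score_0:
  assumes "(s \<longlongrightarrow> 0) F" "- xu < c"
  shows "((\<lambda>\<tau>. regret c xq xu (s \<tau>) q) \<longlongrightarrow> - xu) F"
proof -
  have netv: "((\<lambda>\<tau>. netv xq xu (s \<tau>)) \<longlongrightarrow> - xu) F"
    unfolding netv_def using assms(1) by (auto intro!: tendsto_eq_intros)
  have "\<forall>\<^sub>F \<tau> in F. regret c xq xu (s \<tau>) q = netv xq xu (s \<tau>)"
    using order_tendstoD(2)[OF netv assms(2)] by eventually_elim (simp add: regret_def payoff_def accp_def)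
  from tendsto_cong[OF this] netv show ?thesis by simp
qed

lemma regret_tendsto_of_score_1:
  assumes "(s \<longlongrightarrow> 1) F" "c < xq"
  shows "((\<lambda>\<tau>. regret c xq xu (s \<tau>) q) \<longlongrightarrow> (xq + xu) - (xq + xu) * q) F"
proof -
  have netv: "((\<lambda>\<tau>. netv xq xu (s \<tau>)) \<longlongrightarrow> xq) F"
    unfolding netv_def using assms(1) by (auto intro!: tendsto_eq_intros)
  have "\<forall>\<^sub>F \<tau> in F. regret c xq xu (s \<tau>) q = netv xq xu (s \<tau>) - (q * xq - (1 - q) * xu)"
    using order_tendstoD(1)[OF netv assms(2)] by eventually_elim (simp add: regret_def payoff_def accp_def)
  moreover have "((\<lambda>\<tau>. netv xq xu (s \<tau>) - (q * xq - (1 - q) * xu)) \<longlongrightarrow> (xq + xu) - (xq + xu) * q) F"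
    using netv by (auto intro!: tendsto_eq_intros simp: algebra_simps)
  ultimately show ?thesis
    by (simp only: tendsto_cong)
qed

lemma AE_integrable_section:
  fixes h :: "real \<times> real \<Rightarrow> real"
  assumes "integrable lborel h"
  shows "AE \<theta> in lborel. integrable lborel (\<lambda>\<gamma>. h (\<theta>, \<gamma>))"
proof -
  have "pair_sigma_finite (lborel :: real measure) (lborel :: real measure)"
    by (simp add: pair_sigma_finite_def lborel.sigma_finite_measure_axioms)
  then show ?thesis
    using assms by (intro pair_sigma_finite.AE_integrable_fst') (simp_all add: lborel_prod)
qed

lemma regret_s1_tendsto_off_null_set:
  assumes "hq \<in> borel_measurable borel" "hu \<in> borel_measurable borel"
    and "integrable lborel hq" "integrable lborel hu"
    and "\<forall>z. hq z > 0" "\<forall>z. hu z > 0" "0 < \<pi>" "\<pi> < 1" "xq > 0" "xu > 0" "c < xq"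
    and "\<forall>\<theta>. strict_mono (\<lambda>\<gamma>. lr hq hu \<theta> \<gamma>)" "\<forall>\<theta>. \<not> bdd_above (range (\<lambda>\<gamma>. lr hq hu \<theta> \<gamma>))"
  obtains N where "N \<in> null_sets lborel"
    and "\<And>\<theta> q. \<theta> \<notin> N \<Longrightarrow>
      ((\<lambda>\<tau>. regret c xq xu (s1 hq hu \<pi> xq xu \<theta> \<tau>) q) \<longlongrightarrow> (xq + xu) - (xq + xu) * q) (at_left xq)"
proof -
  have "AE \<theta> in lborel. integrable lborel (\<lambda>\<gamma>. hq (\<theta>, \<gamma>)) \<and> integrable lborel (\<lambda>\<gamma>. hu (\<theta>, \<gamma>))"
    using AE_integrable_section[OF assms(3)] AE_integrable_section[OF assms(4)] by eventually_elim simp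
  then obtain N where "N \<in> null_sets lborel"
    and "\<And>\<theta>. \<theta> \<notin> N \<Longrightarrow> integrable lborel (\<lambda>\<gamma>. hq (\<theta>, \<gamma>)) \<and> integrable lborel (\<lambda>\<gamma>. hu (\<theta>, \<gamma>))"
    by (elim AE_E) (fastforce simp: null_sets_def)
  with assms show ?thesis
    by (intro that regret_tendsto_of_score_1[OF s1_tendsto_1]) auto
qed

lemma avg_regret_tendsto:
  fixes Qs Ths :: "nat \<Rightarrow> 'a \<Rightarrow> real"
  assumes "\<And>i. i \<ge> 1 \<Longrightarrow> ((\<lambda>\<tau>. regret c xq xu (s (Ths i \<omega>) \<tau>) (Qs i \<omega>)) \<longlongrightarrow> a - b * Qs i \<omega>) F"
    and "(\<lambda>n. (\<Sum>i\<in>{1..n}. Qs i \<omega>) / n) \<longlonglongrightarrow> p"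
  shows "\<exists>L. (\<forall>m\<ge>1. ((\<lambda>\<tau>. avg_regret c xq xu s Qs Ths m \<omega> \<tau>) \<longlongrightarrow> L m) F) \<and> L \<longlonglongrightarrow> a - b * p"
proof (intro exI conjI allI impI)
  define L where "L m = 1 / real m * (\<Sum>i\<in>{1..m}. a - b * Qs i \<omega>)" for m
  show "((\<lambda>\<tau>. avg_regret c xq xu s Qs Ths m \<omega> \<tau>) \<longlongrightarrow> L m) F" for m
    unfolding avg_regret_def L_def using assms(1) by (intro tendsto_intros) auto
  have "\<forall>\<^sub>F n in sequentially. a - b * ((\<Sum>i\<in>{1..n}. Qs i \<omega>) / n) = L n"
    using eventually_ge_at_top[of "1::nat"]
    by eventually_elim (simp add: L_def sum_subtractf sum_distrib_left[symmetric] field_simps)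
  moreover have "(\<lambda>n. a - b * ((\<Sum>i\<in>{1..n}. Qs i \<omega>) / n)) \<longlonglongrightarrow> a - b * p"
    using assms(2) by (intro tendsto_intros)
  ultimately show "L \<longlonglongrightarrow> a - b * p"
    by (rule Lim_transform_eventually[rotated])
qed

section \<open>A strong law for bounded i.i.d. variables\<close>

lemma (in prob_space) AE_tendsto_of_summable_deviations:
  fixes S :: "nat \<Rightarrow> 'a \<Rightarrow> real"
  assumes [measurable]: "\<And>n. S n \<in> borel_measurable M"
    and summable: "\<And>\<epsilon>. \<epsilon> > 0 \<Longrightarrow> summable (\<lambda>n. prob {x\<in>space M. \<bar>S n x - \<mu>\<bar> \<ge> \<epsilon>})"
  shows "AE x in M. (\<lambda>n. S n x) \<longlonglongrightarrow> \<mu>"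
proof -
  have "AE x in M. \<forall>\<^sub>F n in sequentially. \<bar>S n x - \<mu>\<bar> < 1 / Suc k" for k :: nat
  proof -
    have "AE x in M. \<forall>\<^sub>F n in sequentially. x \<in> space M - {x\<in>space M. \<bar>S n x - \<mu>\<bar> \<ge> 1 / Suc k}"
      by (rule borel_cantelli_AE1) (auto simp: emeasure_eq_measure intro: summable)
    then show ?thesis
      by eventually_elim (auto elim: eventually_mono)
  qed
  then have "AE x in M. \<forall>k. \<forall>\<^sub>F n in sequentially. \<bar>S n x - \<mu>\<bar> < 1 / Suc k"
    by (simp add: AE_all_countable)
  then show ?thesis
  proof eventually_elim
    case (elim x)
    show ?case
    proof (rule tendstoI)
      fix \<epsilon> :: real assume "\<epsilon> > 0"
      then obtain k :: nat where k: "1 / Suc k < \<epsilon>" by (rule nat_approx_posE)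
      show "\<forall>\<^sub>F n in sequentially. dist (S n x) \<mu> < \<epsilon>"
        using elim[rule_format, of k] by eventually_elim (use k in \<open>simp add: dist_real_def\<close>)
    qed
  qed
qed

lemma (in prob_space) AE_mean_tendsto_expectation_bounded_iid:
  fixes X :: "nat \<Rightarrow> 'a \<Rightarrow> real"
  assumes indep: "indep_vars (\<lambda>_. borel) X {1..}"
    and distr: "\<And>i. i \<ge> 1 \<Longrightarrow> distr M borel (X i) = distr M borel Y"
    and Y: "random_variable borel Y" "AE x in M. Y x \<in> {a..b}" "a < b"
  shows "AE x in M. (\<lambda>n. (\<Sum>i\<in>{1..n}. X i x) / n) \<longlonglongrightarrow> expectation Y"
proof (rule AE_tendsto_of_summable_deviations)
  have X: "X i \<in> borel_measurable M" if "i \<ge> 1" for i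
    using indep that unfolding indep_vars_def by auto
  show "(\<lambda>x. (\<Sum>i\<in>{1..n}. X i x) / n) \<in> borel_measurable M" for n
    using X by (intro borel_measurable_divide borel_measurable_sum) auto
  fix \<epsilon> :: real assume "\<epsilon> > 0"
  define r where "r = exp (-2 * \<epsilon>\<^sup>2 / (b - a)\<^sup>2)"
  have bound: "prob {x\<in>space M. \<bar>(\<Sum>i\<in>{1..n}. X i x) / n - expectation Y\<bar> \<ge> \<epsilon>} \<le> 2 * r ^ n"
    if "n \<ge> 1" for n :: nat
  proof -
    interpret Hoeffding_ineq_iid M "{1..n}" X Y a b "expectation Y"
    proof unfold_locales
      show "indep_vars (\<lambda>_. borel) X {1..n}"
        by (rule indep_vars_subset[OF indep]) auto
    qed (use distr Y in auto)
    have "prob {x\<in>space M. \<bar>(\<Sum>i\<in>{1..n}. X i x) / n - expectation Y\<bar> \<ge> \<epsilon>}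
        \<le> 2 * exp (-2 * n * \<epsilon>\<^sup>2 / (b - a)\<^sup>2)"
      using Hoeffding_ineq_abs_ge'[of \<epsilon>] \<open>\<epsilon> > 0\<close> Y(3) that by simp
    also have "exp (-2 * n * \<epsilon>\<^sup>2 / (b - a)\<^sup>2) = r ^ n"
      unfolding r_def exp_of_nat_mult[symmetric] by (simp add: field_simps)
    finally show ?thesis .
  qed
  have "summable (\<lambda>n. 2 * r ^ n)"
    unfolding r_def using \<open>\<epsilon> > 0\<close> Y(3) by (intro summable_mult summable_geometric) auto
  then show "summable (\<lambda>n. prob {x\<in>space M. \<bar>(\<Sum>i\<in>{1..n}. X i x) / n - expectation Y\<bar> \<ge> \<epsilon>})"
    by (rule summable_comparison_test'[where N = 1]) (use bound in auto)
qed

lemma (in prob_space) expectation_zero_one_valued: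
  assumes "Q \<in> borel_measurable M" "\<forall>x\<in>space M. Q x \<in> {0, 1}"
  shows "integrable M Q" "expectation Q = prob {x\<in>space M. Q x = 1}"
proof -
  show "integrable M Q"
    using assms by (intro integrable_const_bound[where B = 1] AE_I2) auto
  have "expectation Q = expectation (indicator {x\<in>space M. Q x = 1})"
    using assms(2) by (intro Bochner_Integration.integral_cong) (auto simp: indicator_def)
  also have "\<dots> = prob {x\<in>space M. Q x = 1}"
    using assms(1) by (simp add: emeasure_eq_measure)
  finally show "expectation Q = prob {x\<in>space M. Q x = 1}" .
qed

section \<open>Null sets and i.i.d. copies\<close>

lemma null_sets_lborel_Times_UNIV:
  assumes "N \<in> null_sets (lborel :: real measure)"
  shows "N \<times> UNIV \<in> null_sets (lborel :: (real \<times> real) measure)"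
proof -
  have "N \<times> UNIV \<in> null_sets (lborel \<Otimes>\<^sub>M (lborel :: real measure))"
    using lborel.sigma_finite_measure_axioms assms by (rule sigma_finite_measure.times_in_null_sets1) simp
  then show ?thesis by (simp add: lborel_prod)
qed

lemma (in prob_space) AE_Pair_notin_null_set:
  fixes Q X Y :: "'a \<Rightarrow> real" and hq hu :: "real \<times> real \<Rightarrow> real"
  assumes [measurable]: "Q \<in> borel_measurable M" "X \<in> borel_measurable M" "Y \<in> borel_measurable M"
    and Q01: "\<forall>x\<in>space M. Q x \<in> {0, 1}"
    and dens_q: "\<forall>B\<in>sets borel. prob {x\<in>space M. Q x = 1 \<and> (X x, Y x) \<in> B} = \<pi> * (LINT z:B|lborel. hq z)"
    and dens_u: "\<forall>B\<in>sets borel. prob {x\<in>space M. Q x = 0 \<and> (X x, Y x) \<in> B} = (1 - \<pi>) * (LINT z:B|lborel. hu z)"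
    and B: "B \<in> null_sets lborel"
  shows "AE x in M. (X x, Y x) \<notin> B"
proof -
  have [measurable]: "B \<in> sets borel"
    using null_setsD2[OF B] by simp
  have [measurable]: "(\<lambda>x. (X x, Y x)) \<in> borel_measurable M"
    by (subst borel_prod[symmetric]) measurable
  have zero: "(LINT z:B|lborel. h z) = 0" for h :: "real \<times> real \<Rightarrow> real"
    unfolding set_lebesgue_integral_def
    by (rule integral_eq_zero_AE) (use AE_not_in[OF B] in \<open>eventually_elim, simp\<close>)
  have "{x\<in>space M. Q x = 1 \<and> (X x, Y x) \<in> B} \<in> null_sets M"
    "{x\<in>space M. Q x = 0 \<and> (X x, Y x) \<in> B} \<in> null_sets M"
    using dens_q dens_u zero by (auto simp: null_sets_def emeasure_eq_measure)
  from AE_not_in[OF this(1)] AE_not_in[OF this(2)] AE_space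
  show ?thesis
    by eventually_elim (use Q01 in auto)
qed

lemma AE_iid_copies:
  fixes Zs :: "nat \<Rightarrow> 'a \<Rightarrow> 'b"
  assumes "Z \<in> measurable M N" "\<And>i. i \<ge> 1 \<Longrightarrow> Zs i \<in> measurable M N"
    and "\<And>i. i \<ge> 1 \<Longrightarrow> distr M N (Zs i) = distr M N Z"
    and "A \<in> sets N" "AE x in M. Z x \<in> A"
  shows "AE x in M. \<forall>i\<ge>1. Zs i x \<in> A"
proof -
  have A: "{z\<in>space N. z \<in> A} \<in> sets N"
    using assms(4) by simp
  have "AE x in M. Zs i x \<in> A" if "i \<ge> 1" for i
  proof -
    have "AE z in distr M N Z. z \<in> A"
      using assms(5) AE_distr_iff[OF assms(1) A] by simp
    then have "AE z in distr M N (Zs i). z \<in> A"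
      by (simp only: assms(3)[OF that])
    then show ?thesis
      using AE_distr_iff[OF assms(2)[OF that] A] by simp
  qed
  then show ?thesis
    unfolding AE_all_countable by (auto intro: AE_I2)
qed

lemma (in prob_space) indep_vars_fst:
  fixes X Y :: "'i \<Rightarrow> 'a \<Rightarrow> real"
  assumes "indep_vars (\<lambda>_. borel) (\<lambda>i x. (X i x, Y i x)) I"
  shows "indep_vars (\<lambda>_. borel) X I"
proof -
  have "fst \<in> borel_measurable (borel :: (real \<times> real) measure)"
    by (subst borel_prod[symmetric]) measurable
  from indep_vars_compose2[OF assms this] show ?thesis
    by simp
qed

lemma distr_fst_eq:
  fixes X Y X' Y' :: "'a \<Rightarrow> real"
  assumes [measurable]: "X \<in> borel_measurable M" "Y \<in> borel_measurable M"
    "X' \<in> borel_measurable M" "Y' \<in> borel_measurable M"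
    and eq: "distr M borel (\<lambda>x. (X x, Y x)) = distr M borel (\<lambda>x. (X' x, Y' x))"
  shows "distr M borel X = distr M borel X'"
proof -
  have [measurable]: "fst \<in> borel_measurable (borel :: (real \<times> real) measure)"
    "(\<lambda>x. (X x, Y x)) \<in> borel_measurable M" "(\<lambda>x. (X' x, Y' x)) \<in> borel_measurable M"
    by (subst borel_prod[symmetric], measurable)+
  have "distr M borel X = distr (distr M borel (\<lambda>x. (X x, Y x))) borel fst"
    by (subst distr_distr) (simp_all add: comp_def)
  also have "\<dots> = distr M borel X'"
    unfolding eq by (subst distr_distr) (simp_all add: comp_def)
  finally show ?thesis .
qed

lemma (in prob_space) AE_iid_copies_snd_notin:
  fixes Q \<Theta> :: "'a \<Rightarrow> real" and Qs Ths :: "nat \<Rightarrow> 'a \<Rightarrow> real"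
  assumes "Q \<in> borel_measurable M" "\<Theta> \<in> borel_measurable M"
    and "\<forall>i\<ge>1. Qs i \<in> borel_measurable M \<and> Ths i \<in> borel_measurable M"
    and "\<forall>i\<ge>1. distr M borel (\<lambda>\<omega>. (Qs i \<omega>, Ths i \<omega>)) = distr M borel (\<lambda>\<omega>. (Q \<omega>, \<Theta> \<omega>))"
    and "N \<in> sets borel" "AE \<omega> in M. \<Theta> \<omega> \<notin> N"
  shows "AE \<omega> in M. \<forall>i\<ge>1. Ths i \<omega> \<notin> N"
proof -
  have "UNIV \<times> - N \<in> sets (borel :: (real \<times> real) measure)"
    using assms(5) by (subst borel_prod[symmetric]) (auto intro!: pair_measureI)
  then have "AE \<omega> in M. \<forall>i\<ge>1. (Qs i \<omega>, Ths i \<omega>) \<in> UNIV \<times> - N"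
    using assms by (intro AE_iid_copies[where A = "UNIV \<times> - N"]) auto
  then show ?thesis by simp
qed

lemma (in prob_space) AE_mean_iid_labels_tendsto:
  fixes Q \<Theta> :: "'a \<Rightarrow> real" and Qs Ths :: "nat \<Rightarrow> 'a \<Rightarrow> real"
  assumes "Q \<in> borel_measurable M" "\<Theta> \<in> borel_measurable M" "\<forall>x\<in>space M. Q x \<in> {0, 1}"
    and "\<forall>i\<ge>1. Qs i \<in> borel_measurable M \<and> Ths i \<in> borel_measurable M"
    and "indep_vars (\<lambda>_. borel) (\<lambda>i \<omega>. (Qs i \<omega>, Ths i \<omega>)) {1..}"
    and "\<forall>i\<ge>1. distr M borel (\<lambda>\<omega>. (Qs i \<omega>, Ths i \<omega>)) = distr M borel (\<lambda>\<omega>. (Q \<omega>, \<Theta> \<omega>))"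
  shows "AE \<omega> in M. (\<lambda>n. (\<Sum>i\<in>{1..n}. Qs i \<omega>) / n) \<longlonglongrightarrow> prob {x\<in>space M. Q x = 1}"
proof -
  have "distr M borel (Qs i) = distr M borel Q" if "i \<ge> 1" for i
    using assms that by (intro distr_fst_eq[where Y = "Ths i" and Y' = \<Theta>]) auto
  then have "AE \<omega> in M. (\<lambda>n. (\<Sum>i\<in>{1..n}. Qs i \<omega>) / n) \<longlonglongrightarrow> expectation Q"
    using assms(1,3)
    by (intro AE_mean_tendsto_expectation_bounded_iid[OF indep_vars_fst[OF assms(5)], of Q 0 1])
      (auto intro!: AE_I2)
  then show ?thesis
    using expectation_zero_one_valued(2)[OF assms(1,3)] by simp
qed

theorem mainTheorem17:
  fixes M :: "'a measure"
    and Q \<Theta> \<Gamma> :: "'a \<Rightarrow> real"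
    and Qs Ths :: "nat \<Rightarrow> 'a \<Rightarrow> real"
    and hq hu :: "real \<times> real \<Rightarrow> real"
    and \<pi> xq xu c :: real
  assumes P: "prob_space M"
    and Q_rv: "Q \<in> borel_measurable M" and Th_rv: "\<Theta> \<in> borel_measurable M"
    and Ga_rv: "\<Gamma> \<in> borel_measurable M"
    and Q_vals: "\<forall>\<omega>\<in>space M. Q \<omega> \<in> {0, 1}"
    and pi_bd: "0 < \<pi>" "\<pi> < 1"
    and Q_prob: "measure M {\<omega>\<in>space M. Q \<omega> = 1} = \<pi>"
    and hq_meas: "hq \<in> borel_measurable borel" and hu_meas: "hu \<in> borel_measurable borel"
    and hq_int: "integrable lborel hq" and hu_int: "integrable lborel hu"
    and hq_pos: "\<forall>z. hq z > 0" and hu_pos: "\<forall>z. hu z > 0"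
    and dens_q: "\<forall>B\<in>sets (borel :: (real \<times> real) measure).
        measure M {\<omega>\<in>space M. Q \<omega> = 1 \<and> (\<Theta> \<omega>, \<Gamma> \<omega>) \<in> B} = \<pi> * (LINT z:B|lborel. hq z)"
    and dens_u: "\<forall>B\<in>sets (borel :: (real \<times> real) measure).
        measure M {\<omega>\<in>space M. Q \<omega> = 0 \<and> (\<Theta> \<omega>, \<Gamma> \<omega>) \<in> B} = (1 - \<pi>) * (LINT z:B|lborel. hu z)"
    and l_cont: "continuous_on UNIV (\<lambda>z. hq z / hu z)"
    and l_mono_th: "\<forall>\<gamma>. strict_mono (\<lambda>\<theta>. lr hq hu \<theta> \<gamma>)"
    and l_mono_ga: "\<forall>\<theta>. strict_mono (\<lambda>\<gamma>. lr hq hu \<theta> \<gamma>)"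
    and l_inf: "\<forall>\<theta>. (INF \<gamma>. lr hq hu \<theta> \<gamma>) = 0"
    and l_sup: "\<forall>\<theta>. \<not> bdd_above (range (\<lambda>\<gamma>. lr hq hu \<theta> \<gamma>))"
    and xq_pos: "xq > 0" and xu_pos: "xu > 0"
    and c_bd: "- xu < c" "c < xq"
    and copies_rv: "\<forall>i\<ge>1. Qs i \<in> borel_measurable M \<and> Ths i \<in> borel_measurable M"
    and copies_indep: "prob_space.indep_vars M (\<lambda>_. borel) (\<lambda>i \<omega>. (Qs i \<omega>, Ths i \<omega>)) {1..}"
    and copies_distr: "\<forall>i\<ge>1. distr M borel (\<lambda>\<omega>. (Qs i \<omega>, Ths i \<omega>)) = distr M borel (\<lambda>\<omega>. (Q \<omega>, \<Theta> \<omega>))"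
  shows
    "(AE \<omega> in M. \<exists>L :: nat \<Rightarrow> real.
        (\<forall>m\<ge>1. ((\<lambda>\<tau>. avg_regret c xq xu (s2 hq hu \<pi> xq xu) Qs Ths m \<omega> \<tau>) \<longlongrightarrow> L m) (at_left xq))
        \<and> L \<longlonglongrightarrow> - xu)
   \<and> (AE \<omega> in M. \<exists>L :: nat \<Rightarrow> real.
        (\<forall>m\<ge>1. ((\<lambda>\<tau>. avg_regret c xq xu (s1 hq hu \<pi> xq xu) Qs Ths m \<omega> \<tau>) \<longlongrightarrow> L m) (at_left xq))
        \<and> L \<longlonglongrightarrow> (1 - \<pi>) * (xq + xu))
   \<and> (\<exists>Y2 Y1 :: 'a \<Rightarrow> real.
        (AE \<omega> in M. ((\<lambda>\<tau>. regret c xq xu (s2 hq hu \<pi> xq xu (\<Theta> \<omega>) \<tau>) (Q \<omega>)) \<longlongrightarrow> Y2 \<omega>) (at_left xq))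
      \<and> (AE \<omega> in M. ((\<lambda>\<tau>. regret c xq xu (s1 hq hu \<pi> xq xu (\<Theta> \<omega>) \<tau>) (Q \<omega>)) \<longlongrightarrow> Y1 \<omega>) (at_left xq))
      \<and> integrable M Y2 \<and> integrable M Y1
      \<and> (LINT \<omega>|M. Y2 \<omega>) = - xu
      \<and> (LINT \<omega>|M. Y1 \<omega>) = (1 - \<pi>) * (xq + xu)
      \<and> (LINT \<omega>|M. Y2 \<omega> - Y1 \<omega>) < 0)"
proof -
  interpret prob_space M by (rule P)
  obtain N where N: "N \<in> null_sets lborel"
    and lim1: "\<And>\<theta> q. \<theta> \<notin> N \<Longrightarrow>
      ((\<lambda>\<tau>. regret c xq xu (s1 hq hu \<pi> xq xu \<theta> \<tau>) q) \<longlongrightarrow> (xq + xu) - (xq + xu) * q) (at_left xq)"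
    using regret_s1_tendsto_off_null_set[OF hq_meas hu_meas hq_int hu_int hq_pos hu_pos pi_bd
        xq_pos xu_pos c_bd(2) l_mono_ga l_sup] by blast
  \<comment> \<open>written as \<open>a - b * q\<close> with \<open>b = 0\<close>, the shape expected by \<open>avg_regret_tendsto\<close>\<close>
  have lim2: "((\<lambda>\<tau>. regret c xq xu (s2 hq hu \<pi> xq xu \<theta> \<tau>) q) \<longlongrightarrow> - xu - 0 * q) (at_left xq)" for \<theta> q
    using regret_tendsto_of_score_0[OF s2_tendsto_0[OF hq_meas hu_meas hq_pos hu_pos pi_bd xq_pos xu_pos] c_bd(1)]
    by simp
  have AE_\<Theta>: "AE \<omega> in M. \<Theta> \<omega> \<notin> N"
    using AE_Pair_notin_null_set[OF Q_rv Th_rv Ga_rv Q_vals dens_q dens_u null_sets_lborel_Times_UNIV[OF N]]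
    by simp
  have AE_copies: "AE \<omega> in M. \<forall>i\<ge>1. Ths i \<omega> \<notin> N"
    using AE_iid_copies_snd_notin[OF Q_rv Th_rv copies_rv copies_distr _ AE_\<Theta>] N by (simp add: null_sets_def)
  have slln: "AE \<omega> in M. (\<lambda>n. (\<Sum>i\<in>{1..n}. Qs i \<omega>) / n) \<longlonglongrightarrow> \<pi>"
    using AE_mean_iid_labels_tendsto[OF Q_rv Th_rv Q_vals copies_rv copies_indep copies_distr] Q_prob by simp
  have EQ: "integrable M Q" "expectation Q = \<pi>"
    using expectation_zero_one_valued[OF Q_rv Q_vals] Q_prob by simp_all
  have limit1: "(xq + xu) - (xq + xu) * \<pi> = (1 - \<pi>) * (xq + xu)"
    by (simp add: algebra_simps)
  have "(LINT \<omega>|M. - xu - ((xq + xu) - (xq + xu) * Q \<omega>)) = - xu - (1 - \<pi>) * (xq + xu)"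
    using EQ limit1 by (simp add: prob_space)
  moreover have "0 < (1 - \<pi>) * (xq + xu)"
    using pi_bd xq_pos xu_pos by simp
  ultimately have "(LINT \<omega>|M. - xu - ((xq + xu) - (xq + xu) * Q \<omega>)) < 0"
    using xu_pos by simp
  with EQ limit1 show ?thesis
  proof (intro conjI exI)
    show "AE \<omega> in M. \<exists>L :: nat \<Rightarrow> real.
        (\<forall>m\<ge>1. ((\<lambda>\<tau>. avg_regret c xq xu (s2 hq hu \<pi> xq xu) Qs Ths m \<omega> \<tau>) \<longlongrightarrow> L m) (at_left xq))
        \<and> L \<longlonglongrightarrow> - xu"
      using slln by eventually_elim (use avg_regret_tendsto[where s = "s2 hq hu \<pi> xq xu", OF lim2] in simp)
    show "AE \<omega> in M. \<exists>L :: nat \<Rightarrow> real.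
        (\<forall>m\<ge>1. ((\<lambda>\<tau>. avg_regret c xq xu (s1 hq hu \<pi> xq xu) Qs Ths m \<omega> \<tau>) \<longlongrightarrow> L m) (at_left xq))
        \<and> L \<longlonglongrightarrow> (1 - \<pi>) * (xq + xu)"
      using slln AE_copies
    proof eventually_elim
      case (elim \<omega>)
      then show ?case
        using avg_regret_tendsto[where s = "s1 hq hu \<pi> xq xu", OF lim1, of Ths \<omega> Qs \<pi>] limit1 by auto
    qed
    show "AE \<omega> in M. ((\<lambda>\<tau>. regret c xq xu (s2 hq hu \<pi> xq xu (\<Theta> \<omega>) \<tau>) (Q \<omega>)) \<longlongrightarrow> (\<lambda>_. - xu) \<omega>) (at_left xq)"
      using lim2 by simp
    show "AE \<omega> in M. ((\<lambda>\<tau>. regret c xq xu (s1 hq hu \<pi> xq xu (\<Theta> \<omega>) \<tau>) (Q \<omega>))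
        \<longlongrightarrow> (\<lambda>\<omega>. (xq + xu) - (xq + xu) * Q \<omega>) \<omega>) (at_left xq)"
      using AE_\<Theta> by eventually_elim (rule lim1)
  qed (simp_all add: prob_space)
qed

end
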